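(* Let $\mathcal{E}\in(0,1)$. If $u\in L^\infty(\mathbb{R})\cap H^2_{\rm loc}(\mathbb{R})$ satisfies $L_+u=0$, then $u=Cu_0'$ for some constant $C$. Moreover, there exists a unique odd $2T_0$-periodic function $U\in H^2_{\rm per}(0,2T_0)$ such that $L_+U=u_0$.
   Context: For $\mathcal{E}\in(0,1)$, $u_0(x)=\sqrt{1-\mathcal{E}}\,\mathrm{sn}\big(x\sqrt{(1+\mathcal{E})/2},\,k\big)$ with $k=\sqrt{(1-\mathcal{E})/(1+\mathcal{E})}$ (Jacobi elliptic function of modulus $k$); it satisfies $u_0''+(1-u_0^2)u_0=0$ and has minimal period $2T_0=4\sqrt{2/(1+\mathcal{E})}\,K(k)$. $L_+u=-u''+(3u_0^2-1)u$. *)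

theory Defs
  imports "HOL-Analysis.Analysis"
begin

text \<open>Incomplete elliptic integral of the first kind (signed, so defined for all real phi).\<close>
definition ellF :: "real \<Rightarrow> real \<Rightarrow> real" where
  "ellF phi k = (LBINT t=0..phi. 1 / sqrt (1 - k^2 * (sin t)^2))"

definition ellK :: "real \<Rightarrow> real" where
  "ellK k = ellF (pi/2) k"

definition jam :: "real \<Rightarrow> real \<Rightarrow> real" where
  "jam x k = (THE phi. ellF phi k = x)"

definition jsn :: "real \<Rightarrow> real \<Rightarrow> real" where
  "jsn x k = sin (jam x k)"

definition modk :: "real \<Rightarrow> real" where
  "modk E = sqrt ((1 - E) / (1 + E))"

definition u0 :: "real \<Rightarrow> real \<Rightarrow> real" where
  "u0 E x = sqrt (1 - E) * jsn (x * sqrt ((1 + E) / 2)) (modk E)"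

text \<open>Half period T0, so the minimal period is 2 T0.\<close>
definition T0 :: "real \<Rightarrow> real" where
  "T0 E = 2 * sqrt (2 / (1 + E)) * ellK (modk E)"

text \<open>u is in H^2_loc(R) with second weak derivative w: u is differentiable everywhere
  (continuous representative), its derivative is absolutely continuous with derivative w,
  and w is square integrable on every compact interval.\<close>
definition H2loc_with :: "(real \<Rightarrow> real) \<Rightarrow> (real \<Rightarrow> real) \<Rightarrow> bool" where
  "H2loc_with u w \<longleftrightarrow> (\<exists>u'. (\<forall>x. (u has_real_derivative u' x) (at x)) \<and>
      (\<forall>a b. a \<le> b \<longrightarrow> (w has_integral (u' b - u' a)) {a..b}
                      \<and> (\<lambda>t. (w t)^2) integrable_on {a..b}))"

definition Lplus_eq :: "real \<Rightarrow> (real \<Rightarrow> real) \<Rightarrow> (real \<Rightarrow> real) \<Rightarrow> bool" where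
  "Lplus_eq E u f \<longleftrightarrow> (\<exists>w. H2loc_with u w \<and>
      (AE x in lborel. - w x + (3 * (u0 E x)^2 - 1) * u x = f x))"

end

theory Submission
  imports Defs
begin

(* The profile u0 is a periodic orbit f of f'' = f^3 - f with energy g^2 + f^2 - f^4/2 below the
   separatrix value 1/2, where g = f'. Translation invariance gives L+ g = 0. An explicit second
   solution psi = g S + (2 - 2 g(0)^2) f - f^3, with S the primitive of f^2 - 2 g(0)^2, satisfies
   psi(x + P) = psi(x) + S(P) g(x) with S(P) < 0, so every solution of L+ u = 0 is a g + b psi and
   it is bounded only if b = 0. Scaling invariance gives L+ phi = f for phi = (f + x g)/2, which
   drifts by P g/2 per period; U = phi - P/(2 S(P)) psi is odd and P-periodic, and it is unique
   because the difference of two such solutions is a bounded kernel element, i.e. a multiple of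
   the even function g, and odd. Weak H^2_loc solutions are classical because the coefficients
   are continuous. *)

section \<open>Calculus on the real line\<close>

lemma LBINT_has_real_derivative:
  assumes "continuous_on UNIV h"
  shows "((\<lambda>x. LBINT t=0..x. h t) has_real_derivative h x) (at x)"
proof -
  let ?a = "min x 0 - 1" and ?b = "max x 0 + 1"
  have "((\<lambda>u. LBINT t=(ereal 0)..u. h t) has_vector_derivative h x) (at x within {?a..?b})"
    by (rule interval_integral_FTC2) (auto intro: continuous_on_subset[OF assms])
  then have "((\<lambda>u. LBINT t=(ereal 0)..u. h t) has_vector_derivative h x) (at x)"
    by (subst (asm) at_within_interior[of x]) auto
  then show ?thesis
    unfolding has_real_derivative_iff_has_vector_derivative by (simp add: zero_ereal_def)
qed

lemma has_real_derivative_if_integral_AE: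
  fixes F w h :: "real \<Rightarrow> real"
  assumes F: "\<And>a b. a \<le> b \<Longrightarrow> (w has_integral (F b - F a)) {a..b}"
    and ae: "AE x in lborel. w x = h x" and h: "continuous_on UNIV h"
  shows "(F has_real_derivative h x) (at x)"
proof -
  let ?a = "x - 1" and ?b = "x + 1"
  have integral_eq: "integral {?a..y} h = F y - F ?a" if "?a \<le> y" for y
  proof -
    have "AE t in lborel. t \<in> {?a..y} \<longrightarrow> w t = h t"
      using ae by eventually_elim auto
    with F[OF that] have "(h has_integral (F y - F ?a)) {?a..y}"
      using has_integral_AE by blast
    then show ?thesis by (simp add: integral_unique)
  qed
  have "((\<lambda>y. integral {?a..y} h) has_real_derivative h x) (at x within {?a..?b})"
    by (rule integral_has_real_derivative) (auto intro: continuous_on_subset[OF h])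
  then have "((\<lambda>y. integral {?a..y} h) has_real_derivative h x) (at x)"
    by (subst (asm) at_within_interior[of x]) auto
  then have "((\<lambda>y. F ?a + integral {?a..y} h) has_real_derivative h x) (at x)"
    by (auto intro!: derivative_eq_intros)
  then show ?thesis
    by (rule has_field_derivative_transform_within_open[where S="{?a<..<?b}"]) (auto simp: integral_eq)
qed

lemma antiderivative_odd:
  assumes F: "\<And>x. (F has_real_derivative h x) (at x)"
    and h: "\<And>x. h (- x) = h x" and F0: "F 0 = 0"
  shows "F (- x) = - F x"
proof -
  have "((\<lambda>x. F x + F (- x)) has_real_derivative 0) (at x)" for x
  proof -
    have "((\<lambda>x. F (- x)) has_real_derivative - h (- x)) (at x)"
      using F[of "- x"] by (simp add: DERIV_mirror)
    from DERIV_add[OF F this] show ?thesis by (simp add: h)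
  qed
  then have "F x + F (- x) = F 0 + F (- 0)"
    by (intro DERIV_isconst_all[where f="\<lambda>x. F x + F (- x)"]) blast
  then show ?thesis using F0 by simp
qed

lemma antiderivative_periodic:
  assumes F: "\<And>x. (F has_real_derivative h x) (at x)"
    and h: "\<And>x. h (x + P) = h x" and F0: "F 0 = 0"
  shows "F (x + P) = F x + F P"
proof -
  have "((\<lambda>x. F (x + P) - F x) has_real_derivative 0) (at x)" for x
    using DERIV_diff[OF F[of "x + P", unfolded DERIV_shift] F[of x]] by (simp add: h)
  then have "F (x + P) - F x = F (0 + P) - F 0"
    by (intro DERIV_isconst_all[where f="\<lambda>x. F (x + P) - F x"]) blast
  then show ?thesis using F0 by simp
qed

lemma derivative_periodic:
  assumes F: "\<And>x. (F has_real_derivative h x) (at x)" and "\<And>x. F (x + P) = F x"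
  shows "h (x + P) = h x"
proof -
  have "(F has_real_derivative h (x + P)) (at x)"
    using F[of "x + P", unfolded DERIV_shift] by (simp add: assms(2))
  then show ?thesis using DERIV_unique[OF _ F] by blast
qed

lemma derivative_odd_imp_even:
  assumes F: "\<And>x. (F has_real_derivative h x) (at x)" and "\<And>x. F (- x) = - F x"
  shows "h (- x) = h x"
proof -
  have "((\<lambda>x. - F x) has_real_derivative - h (- x)) (at x)"
    using F[of "- x"] by (simp add: DERIV_mirror assms(2))
  moreover have "((\<lambda>x. - F x) has_real_derivative - h x) (at x)"
    by (intro derivative_intros F)
  ultimately show ?thesis using DERIV_unique by fastforce
qed

lemma periodic_at_multiple:
  "(\<And>x. F (x + P) = F x) \<Longrightarrow> F (real n * P) = F 0"
  by (induction n) (simp_all add: distrib_right, metis add.commute)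

lemma gronwall_zero_forward:
  fixes e e' :: "real \<Rightarrow> real"
  assumes e: "\<And>t. (e has_real_derivative e' t) (at t)" and e': "\<And>t. e' t \<le> M * e t"
    and "e 0 = 0" and "\<And>t. 0 \<le> e t" and "0 \<le> x"
  shows "e x = 0"
proof -
  have "e x * exp (- M * x) \<le> e 0 * exp (- M * 0)"
  proof (rule DERIV_nonpos_imp_nonincreasing[OF \<open>0 \<le> x\<close>])
    fix t
    have "((\<lambda>t. e t * exp (- M * t)) has_real_derivative (e' t - M * e t) * exp (- M * t)) (at t)"
      by (rule derivative_eq_intros e refl | simp add: algebra_simps)+
    moreover have "(e' t - M * e t) * exp (- M * t) \<le> 0"
      using e'[of t] by (simp add: mult_nonpos_nonneg)
    ultimately show "\<exists>y. ((\<lambda>t. e t * exp (- M * t)) has_real_derivative y) (at t) \<and> y \<le> 0"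
      by blast
  qed
  then show ?thesis using assms(3) assms(4)[of x] by (simp add: mult_le_0_iff)
qed

lemma gronwall_zero:
  fixes e e' :: "real \<Rightarrow> real"
  assumes e: "\<And>t. (e has_real_derivative e' t) (at t)" and e': "\<And>t. \<bar>e' t\<bar> \<le> M * e t"
    and "e 0 = 0" and "\<And>t. 0 \<le> e t"
  shows "e x = 0"
proof (cases "0 \<le> x")
  case True
  show ?thesis
    by (rule gronwall_zero_forward[OF e _ assms(3,4) True]) (use e' abs_le_D1 in blast)
next
  case False
  have d: "((\<lambda>t. e (- t)) has_real_derivative - e' (- t)) (at t)" for t
    using e[of "- t"] by (simp add: DERIV_mirror)
  have b: "- e' (- t) \<le> M * e (- t)" for t
    using e'[of "- t"] by linarith
  have "e (- (- x)) = 0"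
    by (rule gronwall_zero_forward[OF d b]) (use assms False in auto)
  then show ?thesis by simp
qed

section \<open>Classical and weak solutions of -y'' + q y = r\<close>

definition classical_solution ::
    "(real \<Rightarrow> real) \<Rightarrow> (real \<Rightarrow> real) \<Rightarrow> (real \<Rightarrow> real) \<Rightarrow> (real \<Rightarrow> real) \<Rightarrow> bool" where
  "classical_solution q r y y' \<longleftrightarrow>
     (\<forall>x. (y has_real_derivative y' x) (at x) \<and> (y' has_real_derivative q x * y x - r x) (at x))"

lemma classical_solution_diff:
  assumes "classical_solution q r y y'" and "classical_solution q s z z'"
  shows "classical_solution q (\<lambda>x. r x - c * s x) (\<lambda>x. y x - c * z x) (\<lambda>x. y' x - c * z' x)"
  using assms unfolding classical_solution_def
  by (auto intro!: derivative_eq_intros simp: algebra_simps)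

lemma classical_solution_unique:
  assumes sol: "classical_solution q (\<lambda>_. 0) y y'" and "y 0 = 0" and "y' 0 = 0"
    and q: "\<And>x. \<bar>1 + q x\<bar> \<le> M"
  shows "y x = 0"
proof -
  define e where "e t = (y t)^2 + (y' t)^2" for t
  have de: "(e has_real_derivative 2 * y t * y' t * (1 + q t)) (at t)" for t
    using sol unfolding e_def[abs_def] classical_solution_def
    by (auto intro!: derivative_eq_intros simp: algebra_simps)
  have "\<bar>2 * y t * y' t * (1 + q t)\<bar> \<le> M * e t" for t
  proof -
    have "\<bar>2 * y t * y' t\<bar> \<le> e t"
      using sum_squares_bound[of "\<bar>y t\<bar>" "\<bar>y' t\<bar>"]
      by (simp add: e_def abs_mult power2_eq_square)
    then have "\<bar>2 * y t * y' t\<bar> * \<bar>1 + q t\<bar> \<le> e t * M"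
      using q[of t] by (intro mult_mono) (auto simp: e_def)
    then show ?thesis by (simp add: abs_mult mult.commute)
  qed
  then have "e x = 0"
    by (rule gronwall_zero[OF de]) (auto simp: e_def assms)
  then show ?thesis by (simp add: e_def)
qed

lemma H2loc_with_if_classical_solution:
  assumes sol: "classical_solution q r u u'"
    and q: "continuous_on UNIV q" and r: "continuous_on UNIV r"
  shows "H2loc_with u (\<lambda>x. q x * u x - r x)"
  unfolding H2loc_with_def
proof (intro exI conjI allI impI)
  show u: "(u has_real_derivative u' x) (at x)" for x
    using sol by (simp add: classical_solution_def)
  have "continuous_on UNIV (\<lambda>t. (q t * u t - r t)^2)"
    using has_real_derivative_imp_continuous_on[OF u] by (intro continuous_intros q r)
  then show "(\<lambda>t. (q t * u t - r t)^2) integrable_on {a..b}" for a b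
    by (rule integrable_continuous_interval[OF continuous_on_subset]) simp
  fix a b :: real assume "a \<le> b"
  then show "((\<lambda>x. q x * u x - r x) has_integral (u' b - u' a)) {a..b}"
  proof (rule fundamental_theorem_of_calculus)
    fix x
    have "(u' has_real_derivative q x * u x - r x) (at x)"
      using sol by (simp add: classical_solution_def)
    then show "(u' has_vector_derivative q x * u x - r x) (at x within {a..b})"
      by (simp add: has_real_derivative_iff_has_vector_derivative[symmetric] has_field_derivative_at_within)
  qed
qed

lemma weak_solution_iff_classical:
  assumes q: "continuous_on UNIV q" and r: "continuous_on UNIV r"
  shows "(\<exists>w. H2loc_with u w \<and> (AE x in lborel. - w x + q x * u x = r x))
         \<longleftrightarrow> (\<exists>u'. classical_solution q r u u')"
proof
  assume "\<exists>w. H2loc_with u w \<and> (AE x in lborel. - w x + q x * u x = r x)"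
  then obtain w where "H2loc_with u w" and ae: "AE x in lborel. - w x + q x * u x = r x"
    by blast
  then obtain u' where u: "\<And>x. (u has_real_derivative u' x) (at x)"
    and w: "\<And>a b. a \<le> b \<Longrightarrow> (w has_integral (u' b - u' a)) {a..b}"
    unfolding H2loc_with_def by blast
  have "AE x in lborel. w x = q x * u x - r x"
    using ae by eventually_elim auto
  moreover have "continuous_on UNIV (\<lambda>x. q x * u x - r x)"
    using has_real_derivative_imp_continuous_on[OF u] by (intro continuous_intros q r)
  ultimately have "(u' has_real_derivative q x * u x - r x) (at x)" for x
    using w by (rule has_real_derivative_if_integral_AE[rotated])
  with u show "\<exists>u'. classical_solution q r u u'"
    unfolding classical_solution_def by blast
next
  assume "\<exists>u'. classical_solution q r u u'"
  then obtain u' where "classical_solution q r u u'" by blast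
  then have "H2loc_with u (\<lambda>x. q x * u x - r x)"
    by (rule H2loc_with_if_classical_solution[OF _ q r])
  then show "\<exists>w. H2loc_with u w \<and> (AE x in lborel. - w x + q x * u x = r x)"
    by (intro exI[of _ "\<lambda>x. q x * u x - r x"] conjI) simp_all
qed

section \<open>Linearisation about an odd periodic orbit of f'' = f^3 - f\<close>

(* (g 0)^2 is the conserved energy g^2 + f^2 - f^4/2; the heteroclinic orbit has energy 1/2. *)
locale periodic_orbit =
  fixes f g :: "real \<Rightarrow> real" and P :: real
  assumes f_deriv: "\<And>x. (f has_real_derivative g x) (at x)"
    and g_deriv: "\<And>x. (g has_real_derivative (f x)^3 - f x) (at x)"
    and f_odd: "\<And>x. f (- x) = - f x"
    and f_periodic: "\<And>x. f (x + P) = f x"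
    and f_bounded: "\<And>x. (f x)^2 < 1"
    and g_0_nonzero: "g 0 \<noteq> 0"
    and energy_below_separatrix: "(g 0)^2 < 1/2"
    and period_pos: "0 < P"
begin

definition q :: "real \<Rightarrow> real" where
  "q x = 3 * (f x)^2 - 1"

lemma f_0: "f 0 = 0"
  using f_odd[of 0] by simp

lemma continuous_on_f: "continuous_on A f"
  using f_deriv by (rule has_real_derivative_imp_continuous_on)

lemma continuous_on_g: "continuous_on A g"
  using g_deriv by (rule has_real_derivative_imp_continuous_on)

lemma continuous_on_q: "continuous_on A q"
  unfolding q_def by (intro continuous_intros continuous_on_f)

lemma abs_1_plus_q_le: "\<bar>1 + q x\<bar> \<le> 3"
  using f_bounded[of x] by (simp add: q_def)

lemma g_periodic: "g (x + P) = g x"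
  by (rule derivative_periodic[OF f_deriv f_periodic])

lemma g_at_multiple: "g (real n * P) = g 0"
  by (rule periodic_at_multiple) (rule g_periodic)

lemma g_even: "g (- x) = g x"
  by (rule derivative_odd_imp_even[OF f_deriv f_odd])

lemma energy: "(g x)^2 + (f x)^2 - (f x)^4 / 2 = (g 0)^2"
proof -
  have "((\<lambda>x. (g x)^2 + (f x)^2 - (f x)^4 / 2) has_real_derivative 0) (at x)" for x
    by (rule derivative_eq_intros f_deriv g_deriv refl | simp)+
       (simp add: algebra_simps power2_eq_square power3_eq_cube power4_eq_xxxx)
  then have "(g x)^2 + (f x)^2 - (f x)^4 / 2 = (g 0)^2 + (f 0)^2 - (f 0)^4 / 2"
    by (intro DERIV_isconst_all[where f="\<lambda>x. (g x)^2 + (f x)^2 - (f x)^4 / 2"]) blast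
  then show ?thesis by (simp add: f_0)
qed

lemma g_solution: "classical_solution q (\<lambda>_. 0) g (\<lambda>x. (f x)^3 - f x)"
  unfolding classical_solution_def q_def
  by (auto intro!: derivative_eq_intros f_deriv g_deriv simp: algebra_simps power2_eq_square)

definition S :: "real \<Rightarrow> real" where
  "S x = (LBINT t=0..x. (f t)^2 - 2 * (g 0)^2)"

lemma S_deriv: "(S has_real_derivative (f x)^2 - 2 * (g 0)^2) (at x)"
  unfolding S_def[abs_def]
  by (rule LBINT_has_real_derivative) (intro continuous_intros continuous_on_f)

lemma S_0: "S 0 = 0"
  by (simp add: S_def zero_ereal_def)

lemma S_odd: "S (- x) = - S x"
  by (rule antiderivative_odd[OF S_deriv _ S_0]) (simp add: f_odd)

lemma S_periodic: "S (x + P) = S x + S P"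
  by (rule antiderivative_periodic[OF S_deriv _ S_0]) (simp add: f_periodic)

lemma f_nonzero_near_0: "\<exists>d>0. \<forall>t. 0 < t \<and> t < d \<longrightarrow> f t \<noteq> 0"
proof -
  obtain d where d: "0 < d" "\<And>t. dist t 0 < d \<Longrightarrow> dist (g t) (g 0) < \<bar>g 0\<bar>"
    using continuous_on_g[of UNIV] g_0_nonzero
    unfolding continuous_on_eq_continuous_at[OF open_UNIV] continuous_at_eps_delta
    by (metis UNIV_I zero_less_abs_iff)
  have "f t \<noteq> 0" if t: "0 < t" "t < d" for t
  proof -
    obtain \<eta> where \<eta>: "0 < \<eta>" "\<eta> < t" "f t - f 0 = (t - 0) * g \<eta>"
      using MVT2[OF \<open>0 < t\<close> f_deriv] by blast
    have "g \<eta> \<noteq> 0"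
      using d(2)[of \<eta>] \<eta> t by (auto simp: dist_real_def)
    with \<eta> t show ?thesis by (simp add: f_0)
  qed
  with d show ?thesis by blast
qed

(* By energy conservation (S + 2 f g)' = 3 f^2 (f^2 - 1), which is <= 0 and < 0 just after 0. *)
lemma S_period_neg: "S P < 0"
proof -
  define T where "T x = S x + 2 * f x * g x" for x
  have T: "(T has_real_derivative 3 * (f x)^2 * ((f x)^2 - 1)) (at x)" for x
  proof -
    have "(T has_real_derivative
        (f x)^2 - 2 * (g 0)^2 + 2 * (g x * g x + f x * ((f x)^3 - f x))) (at x)"
      unfolding T_def[abs_def]
      by (rule derivative_eq_intros S_deriv f_deriv g_deriv refl | simp add: algebra_simps)+
    moreover have "(f x)^2 - 2 * (g 0)^2 + 2 * (g x * g x + f x * ((f x)^3 - f x))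
        = 3 * (f x)^2 * ((f x)^2 - 1)"
      using energy[of x] by algebra
    ultimately show ?thesis by simp
  qed
  obtain d where d: "0 < d" "\<And>t. 0 < t \<Longrightarrow> t < d \<Longrightarrow> f t \<noteq> 0"
    using f_nonzero_near_0 by blast
  define t1 where "t1 = min d P / 2"
  have t1: "0 < t1" "t1 < d" "t1 \<le> P"
    using d period_pos by (auto simp: t1_def)
  have "T P \<le> T t1"
  proof (rule DERIV_nonpos_imp_nonincreasing[OF t1(3)])
    fix x
    have "3 * (f x)^2 * ((f x)^2 - 1) \<le> 0"
      using f_bounded[of x] by (simp add: mult_nonneg_nonpos)
    with T show "\<exists>y. DERIV T x :> y \<and> y \<le> 0" by blast
  qed
  also have "T t1 < T 0"
  proof (rule DERIV_neg_imp_decreasing_open[OF t1(1)])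
    fix x assume "0 < x" "x < t1"
    then have "f x \<noteq> 0" using d t1 by auto
    then have "3 * (f x)^2 * ((f x)^2 - 1) < 0"
      using f_bounded[of x] by (simp add: mult_pos_neg)
    with T show "\<exists>y. DERIV T x :> y \<and> y < 0" by blast
  qed (rule has_real_derivative_imp_continuous_on[OF T])
  finally show ?thesis
    using f_periodic[of 0] by (simp add: T_def S_0 f_0)
qed

definition psi :: "real \<Rightarrow> real" where
  "psi x = g x * S x + (2 - 2 * (g 0)^2) * f x - (f x)^3"

definition psi' :: "real \<Rightarrow> real" where
  "psi' x = ((f x)^3 - f x) * S x + g x * ((f x)^2 - 2 * (g 0)^2)
            + (2 - 2 * (g 0)^2) * g x - 3 * (f x)^2 * g x"

lemma psi_solution: "classical_solution q (\<lambda>_. 0) psi psi'"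
  unfolding classical_solution_def
proof (intro allI conjI)
  fix x
  show "(psi has_real_derivative psi' x) (at x)"
    unfolding psi_def[abs_def] psi'_def
    by (rule derivative_eq_intros S_deriv f_deriv g_deriv refl | simp add: algebra_simps)+
  show "(psi' has_real_derivative q x * psi x - 0) (at x)"
    unfolding psi'_def[abs_def]
    apply (rule derivative_eq_intros S_deriv f_deriv g_deriv refl)+
    using energy[of x] unfolding q_def psi_def
    apply (simp add: numeral_3_eq_3 numeral_2_eq_2 del: One_nat_def)
    by algebra
qed

lemma psi_0: "psi 0 = 0"
  by (simp add: psi_def S_0 f_0)

lemma psi'_0_nonzero: "psi' 0 \<noteq> 0"
proof -
  have "psi' 0 = g 0 * (2 - 4 * (g 0)^2)"
    by (simp add: psi'_def S_0 f_0 algebra_simps)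
  then show ?thesis using g_0_nonzero energy_below_separatrix by auto
qed

lemma psi_odd: "psi (- x) = - psi x"
  by (simp add: psi_def g_even S_odd f_odd)

lemma psi_quasi_periodic: "psi (x + P) = psi x + S P * g x"
  unfolding psi_def S_periodic f_periodic g_periodic by (simp add: algebra_simps)

lemma psi_at_multiple: "psi (real n * P) = real n * S P * g 0"
proof (induction n)
  case 0
  show ?case by (simp add: psi_0)
next
  case (Suc n)
  have "psi (real (Suc n) * P) = psi (real n * P + P)"
    by (simp add: algebra_simps)
  also have "\<dots> = psi (real n * P) + S P * g 0"
    by (simp only: psi_quasi_periodic g_at_multiple)
  finally show ?case
    using Suc by (simp add: algebra_simps)
qed

lemma homogeneous_solution_decomposition:
  assumes u: "classical_solution q (\<lambda>_. 0) u u'"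
  shows "u x = u 0 / g 0 * g x + u' 0 / psi' 0 * psi x"
proof -
  define a b where "a = u 0 / g 0" and "b = u' 0 / psi' 0"
  from classical_solution_diff[OF classical_solution_diff[OF u g_solution, where c=a]
      psi_solution, where c=b]
  have "classical_solution q (\<lambda>_. 0) (\<lambda>x. u x - a * g x - b * psi x)
          (\<lambda>x. u' x - a * ((f x)^3 - f x) - b * psi' x)"
    by simp
  moreover have "u 0 - a * g 0 - b * psi 0 = 0" and "u' 0 - a * ((f 0)^3 - f 0) - b * psi' 0 = 0"
    using g_0_nonzero psi'_0_nonzero by (simp_all add: a_def b_def psi_0 f_0)
  ultimately have "u x - a * g x - b * psi x = 0"
    by (rule classical_solution_unique[OF _ _ _ abs_1_plus_q_le])
  then show ?thesis by (simp add: a_def b_def)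
qed

lemma homogeneous_solution_eq_multiple_g:
  assumes u: "classical_solution q (\<lambda>_. 0) u u'"
    and bounded: "\<And>n::nat. \<bar>u (real n * P)\<bar> \<le> B"
  shows "u x = u 0 / g 0 * g x"
proof -
  define a b where "a = u 0 / g 0" and "b = u' 0 / psi' 0"
  have u_eq: "u x = a * g x + b * psi x" for x
    unfolding a_def b_def by (rule homogeneous_solution_decomposition[OF u])
  have "b = 0"
  proof (rule ccontr)
    assume "b \<noteq> 0"
    then have "0 < \<bar>b * S P * g 0\<bar>"
      using S_period_neg g_0_nonzero by auto
    then obtain n :: nat where n: "B + \<bar>a * g 0\<bar> < real n * \<bar>b * S P * g 0\<bar>"
      using ex_less_of_nat_mult by blast
    have "u (real n * P) = a * g 0 + b * (real n * S P * g 0)"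
      using u_eq[of "real n * P"] by (simp only: g_at_multiple psi_at_multiple)
    then have "real n * \<bar>b * S P * g 0\<bar> = \<bar>u (real n * P) - a * g 0\<bar>"
      by (simp add: abs_mult mult_ac)
    also have "\<dots> \<le> \<bar>u (real n * P)\<bar> + \<bar>a * g 0\<bar>"
      by (rule abs_triangle_ineq4)
    finally show False
      using bounded[of n] n by linarith
  qed
  with u_eq[of x] show ?thesis by (simp add: a_def)
qed

lemma bounded_homogeneous_solution:
  assumes "bounded (range u)" and "classical_solution q (\<lambda>_. 0) u u'"
  shows "\<exists>C. \<forall>x. u x = C * g x"
proof -
  obtain B where B: "\<And>x. \<bar>u x\<bar> \<le> B"
    using assms(1) unfolding bounded_iff by auto
  have "u x = u 0 / g 0 * g x" for x
    by (rule homogeneous_solution_eq_multiple_g[OF assms(2) B])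
  then show ?thesis by blast
qed

definition phi :: "real \<Rightarrow> real" where
  "phi x = f x / 2 + x * g x / 2"

definition phi' :: "real \<Rightarrow> real" where
  "phi' x = g x + x * ((f x)^3 - f x) / 2"

lemma phi_solution: "classical_solution q f phi phi'"
  unfolding classical_solution_def phi_def[abs_def] phi'_def[abs_def] q_def
  by (auto intro!: derivative_eq_intros f_deriv g_deriv
           simp: field_simps power3_eq_cube power2_eq_square)

definition U :: "real \<Rightarrow> real" where
  "U x = phi x - P / (2 * S P) * psi x"

definition U' :: "real \<Rightarrow> real" where
  "U' x = phi' x - P / (2 * S P) * psi' x"

lemma U_solution: "classical_solution q f U U'"
  using classical_solution_diff[OF phi_solution psi_solution, where c="P / (2 * S P)"]
  by (simp add: U_def[abs_def] U'_def[abs_def])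

lemma U_odd: "U (- x) = - U x"
  by (simp add: U_def phi_def psi_odd f_odd g_even)

lemma U_periodic: "U (x + P) = U x"
proof -
  have phi_drift: "phi (x + P) = phi x + P * g x / 2"
    unfolding phi_def f_periodic g_periodic by (simp add: algebra_simps)
  show ?thesis
    using S_period_neg unfolding U_def psi_quasi_periodic phi_drift by (simp add: field_simps)
qed

lemma periodic_odd_solution_unique:
  "\<exists>!V. (\<forall>x. V (- x) = - V x) \<and> (\<forall>x. V (x + P) = V x) \<and> (\<exists>V'. classical_solution q f V V')"
proof (rule ex1I[of _ U])
  show "(\<forall>x. U (- x) = - U x) \<and> (\<forall>x. U (x + P) = U x) \<and> (\<exists>V'. classical_solution q f U V')"
    using U_odd U_periodic U_solution by blast
next
  fix V assume "(\<forall>x. V (- x) = - V x) \<and> (\<forall>x. V (x + P) = V x) \<and> (\<exists>V'. classical_solution q f V V')"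
  then obtain V' where odd: "\<And>x. V (- x) = - V x" and per: "\<And>x. V (x + P) = V x"
    and V: "classical_solution q f V V'" by blast
  define D where "D x = V x - U x" for x
  have D: "classical_solution q (\<lambda>_. 0) D (\<lambda>x. V' x - U' x)"
    using classical_solution_diff[OF V U_solution, where c=1] by (simp add: D_def[abs_def])
  have D_0: "D 0 = 0"
    using odd[of 0] U_odd[of 0] by (simp add: D_def)
  have "D (x + P) = D x" for x
    by (simp add: D_def per U_periodic)
  then have "\<bar>D (real n * P)\<bar> \<le> 0" for n
    using periodic_at_multiple[of D] D_0 by simp
  then have "D x = 0" for x
    using homogeneous_solution_eq_multiple_g[OF D, of 0 x] D_0 by simp
  then show "V = U"
    by (simp add: D_def fun_eq_iff)
qed

end

section \<open>Jacobi elliptic functions\<close>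

definition ell_integrand :: "real \<Rightarrow> real \<Rightarrow> real" where
  "ell_integrand k t = 1 / sqrt (1 - k^2 * (sin t)^2)"

definition jcn :: "real \<Rightarrow> real \<Rightarrow> real" where
  "jcn x k = cos (jam x k)"

definition jdn :: "real \<Rightarrow> real \<Rightarrow> real" where
  "jdn x k = sqrt (1 - k^2 * (jsn x k)^2)"

context
  fixes k :: real
  assumes k: "k^2 < 1"
begin

lemma ell_radicand_pos: "0 < 1 - k^2 * (sin t)^2"
proof -
  have "k^2 * (sin t)^2 \<le> k^2"
    by (intro mult_left_le) (auto simp: abs_square_le_1)
  with k show ?thesis by linarith
qed

lemma ell_integrand_ge_1: "1 \<le> ell_integrand k t"
proof -
  have "sqrt (1 - k^2 * (sin t)^2) \<le> 1"
    by simp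
  with ell_radicand_pos[of t] show ?thesis
    by (simp add: ell_integrand_def field_simps)
qed

lemma ellF_deriv: "((\<lambda>p. ellF p k) has_real_derivative ell_integrand k p) (at p)"
  unfolding ellF_def ell_integrand_def
  by (rule LBINT_has_real_derivative)
     (use ell_radicand_pos in \<open>auto intro!: continuous_intros simp: less_le\<close>)

lemma ellF_0: "ellF 0 k = 0"
  by (simp add: ellF_def zero_ereal_def)

lemma ellF_odd: "ellF (- p) k = - ellF p k"
  by (rule antiderivative_odd[where F="\<lambda>p. ellF p k", OF ellF_deriv _ ellF_0])
     (simp add: ell_integrand_def)

lemma ellF_add_pi: "ellF (p + pi) k = ellF p k + ellF pi k"
  by (rule antiderivative_periodic[where F="\<lambda>p. ellF p k", OF ellF_deriv _ ellF_0])
     (simp add: ell_integrand_def)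

lemma ellF_pi: "ellF pi k = 2 * ellK k"
proof -
  have "((\<lambda>p. ellF p k + ellF (pi - p) k) has_real_derivative 0) (at x)" for x
  proof -
    have "((\<lambda>p. ellF (pi - p) k) has_real_derivative ell_integrand k (pi - x) * (- 1)) (at x)"
      by (rule DERIV_chain2[OF ellF_deriv]) (auto intro!: derivative_eq_intros)
    from DERIV_add[OF ellF_deriv this] show ?thesis
      by (simp add: ell_integrand_def)
  qed
  then have "ellF 0 k + ellF (pi - 0) k = ellF (pi / 2) k + ellF (pi - pi / 2) k"
    by (intro DERIV_isconst_all[where f="\<lambda>p. ellF p k + ellF (pi - p) k"]) blast
  then show ?thesis by (simp add: ellF_0 ellK_def)
qed

lemma ellF_strict_mono: "a < b \<Longrightarrow> ellF a k < ellF b k"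
proof (rule DERIV_pos_imp_increasing[where f="\<lambda>p. ellF p k"])
  fix x
  show "\<exists>y. ((\<lambda>p. ellF p k) has_real_derivative y) (at x) \<and> 0 < y"
    using ellF_deriv ell_integrand_ge_1[of x] by force
qed

lemma ellF_inj: "ellF a k = ellF b k \<Longrightarrow> a = b"
  by (metis ellF_strict_mono less_irrefl linorder_neqE_linordered_idom)

lemma ellF_ge: "0 \<le> p \<Longrightarrow> p \<le> ellF p k"
proof -
  assume "0 \<le> p"
  have "ellF 0 k - 0 \<le> ellF p k - p"
  proof (rule DERIV_nonneg_imp_nondecreasing[where f="\<lambda>p. ellF p k - p", OF \<open>0 \<le> p\<close>])
    fix x
    have "((\<lambda>p. ellF p k - p) has_real_derivative ell_integrand k x - 1) (at x)"
      by (intro derivative_intros ellF_deriv)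
    then show "\<exists>y. ((\<lambda>p. ellF p k - p) has_real_derivative y) (at x) \<and> 0 \<le> y"
      using ell_integrand_ge_1[of x] by force
  qed
  then show ?thesis by (simp add: ellF_0)
qed

lemma isCont_ellF: "isCont (\<lambda>p. ellF p k) x"
  using ellF_deriv DERIV_isCont by blast

lemma ellF_surj: "\<exists>p. ellF p k = x"
proof (cases "0 \<le> x")
  case True
  have "\<exists>p\<ge>0. p \<le> x \<and> ellF p k = x"
    by (rule IVT) (use True ellF_ge[of x] in \<open>auto simp: ellF_0 isCont_ellF\<close>)
  then show ?thesis by blast
next
  case False
  have "\<exists>p\<ge>x. p \<le> 0 \<and> ellF p k = x"
    by (rule IVT) (use False ellF_ge[of "- x"] in \<open>auto simp: ellF_0 ellF_odd isCont_ellF\<close>)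
  then show ?thesis by blast
qed

lemma ellF_jam: "ellF (jam x k) k = x"
proof -
  obtain p where p: "ellF p k = x"
    using ellF_surj by blast
  have "ellF (THE p. ellF p k = x) k = x"
    by (rule theI[of _ p]) (use p ellF_inj in auto)
  then show ?thesis by (simp add: jam_def)
qed

lemma jam_ellF: "jam (ellF p k) k = p"
  by (rule ellF_inj) (rule ellF_jam)

lemma isCont_jam: "isCont (\<lambda>x. jam x k) x"
proof -
  have "isCont (\<lambda>x. jam x k) (ellF (jam x k) k)"
    by (rule isCont_inverse_function[where d=1]) (auto simp: jam_ellF isCont_ellF)
  then show ?thesis by (simp add: ellF_jam)
qed

lemma jam_deriv: "((\<lambda>x. jam x k) has_real_derivative jdn x k) (at x)"
proof -
  have "((\<lambda>x. jam x k) has_real_derivative inverse (ell_integrand k (jam x k))) (at x)"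
    by (rule DERIV_inverse_function[where a="x - 1" and b="x + 1"])
       (use ellF_deriv ell_integrand_ge_1[of "jam x k"] ellF_jam isCont_jam in auto)
  then show ?thesis
    by (simp add: ell_integrand_def jdn_def jsn_def)
qed

lemma jam_0: "jam 0 k = 0"
  using jam_ellF[of 0] by (simp add: ellF_0)

lemma jam_odd: "jam (- x) k = - jam x k"
  by (metis ellF_odd ellF_jam jam_ellF)

lemma jam_add_2K: "jam (x + 2 * ellK k) k = jam x k + pi"
  by (metis ellF_add_pi ellF_pi ellF_jam jam_ellF)

lemma ellK_pos: "0 < ellK k"
  using ellF_strict_mono[of 0 "pi / 2"] by (simp add: ellF_0 ellK_def)

lemma jsn_deriv: "((\<lambda>x. jsn x k) has_real_derivative jcn x k * jdn x k) (at x)"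
  unfolding jsn_def[abs_def] jcn_def
  using DERIV_chain2[OF DERIV_sin jam_deriv] by simp

lemma jcn_deriv: "((\<lambda>x. jcn x k) has_real_derivative - jsn x k * jdn x k) (at x)"
  unfolding jcn_def[abs_def] jsn_def
  using DERIV_chain2[OF DERIV_cos jam_deriv] by simp

lemma jdn_sq: "(jdn x k)^2 = 1 - k^2 * (jsn x k)^2"
  using ell_radicand_pos[of "jam x k"] by (simp add: jdn_def jsn_def)

lemma jdn_pos: "0 < jdn x k"
  using ell_radicand_pos[of "jam x k"] by (simp add: jdn_def jsn_def)

lemma jdn_deriv: "((\<lambda>x. jdn x k) has_real_derivative - (k^2) * jsn x k * jcn x k) (at x)"
proof -
  have radicand: "((\<lambda>x. 1 - k^2 * (jsn x k)^2) has_real_derivative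
      - (k^2 * (2 * jsn x k * (jcn x k * jdn x k)))) (at x)"
    by (rule derivative_eq_intros jsn_deriv refl | simp)+
  have "((\<lambda>x. jdn x k) has_real_derivative
      inverse (jdn x k) / 2 * - (k^2 * (2 * jsn x k * (jcn x k * jdn x k)))) (at x)"
    using DERIV_chain2[OF DERIV_real_sqrt radicand] ell_radicand_pos[of "jam x k"]
    by (simp add: jdn_def jsn_def)
  then show ?thesis
    by (rule DERIV_cong) (use jdn_pos[of x] in \<open>simp add: field_simps\<close>)
qed

lemma jcn_sq: "(jcn x k)^2 = 1 - (jsn x k)^2"
  by (simp add: jcn_def jsn_def cos_squared_eq)

lemma jcn_jdn_deriv:
  "((\<lambda>x. jcn x k * jdn x k) has_real_derivative
      - (1 + k^2) * jsn x k + 2 * k^2 * (jsn x k)^3) (at x)"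
  by (rule DERIV_cong[OF DERIV_mult[OF jcn_deriv jdn_deriv]])
     (use jdn_sq[of x] jcn_sq[of x] in algebra)

end

section \<open>The cnoidal wave u0\<close>

definition du0 :: "real \<Rightarrow> real \<Rightarrow> real" where
  "du0 E x = sqrt (1 - E) * sqrt ((1 + E) / 2) *
     (jcn (x * sqrt ((1 + E) / 2)) (modk E) * jdn (x * sqrt ((1 + E) / 2)) (modk E))"

context
  fixes E :: real
  assumes E: "0 < E" "E < 1"
begin

lemma modk_sq: "(modk E)^2 = (1 - E) / (1 + E)"
  using E by (simp add: modk_def)

lemma modk_sq_less_1: "(modk E)^2 < 1"
  using E by (simp add: modk_sq field_simps)

lemma u0_deriv: "(u0 E has_real_derivative du0 E x) (at x)"
  unfolding u0_def[abs_def] du0_def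
  by (rule DERIV_cong[OF DERIV_cmult[OF DERIV_chain2[OF jsn_deriv[OF modk_sq_less_1]]]])
     (auto intro!: derivative_eq_intros)

lemma du0_deriv: "(du0 E has_real_derivative (u0 E x)^3 - u0 E x) (at x)"
proof -
  let ?A = "sqrt (1 - E)" and ?c = "sqrt ((1 + E) / 2)" and ?k = "modk E"
  let ?s = "jsn (x * ?c) ?k"
  have "(du0 E has_real_derivative
      ?A * ?c * ((- (1 + ?k^2) * ?s + 2 * ?k^2 * ?s^3) * ?c)) (at x)"
    unfolding du0_def[abs_def]
    by (intro DERIV_cmult DERIV_chain2[OF jcn_jdn_deriv[OF modk_sq_less_1]])
       (auto intro!: derivative_eq_intros)
  moreover have "?c * ?c * (1 + ?k^2) = 1" and "2 * ?c * ?c * ?k^2 = ?A * ?A"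
    using E by (simp_all add: modk_sq field_simps)
  then have "?A * ?c * ((- (1 + ?k^2) * ?s + 2 * ?k^2 * ?s^3) * ?c) = (?A * ?s)^3 - ?A * ?s"
    by algebra
  ultimately show ?thesis by (simp add: u0_def)
qed

lemma u0_odd: "u0 E (- x) = - u0 E x"
  by (simp add: u0_def jsn_def jam_odd[OF modk_sq_less_1])

lemma u0_periodic: "u0 E (x + 2 * T0 E) = u0 E x"
proof -
  let ?c = "sqrt ((1 + E) / 2)" and ?k = "modk E"
  have "sqrt (2 / (1 + E)) * ?c = 1"
    using E by (simp add: real_sqrt_mult[symmetric])
  then have "(x + 2 * T0 E) * ?c = x * ?c + 2 * ellK ?k + 2 * ellK ?k"
    by (simp add: T0_def algebra_simps)
  then have "jam ((x + 2 * T0 E) * ?c) ?k = jam (x * ?c) ?k + pi + pi"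
    by (simp only: jam_add_2K[OF modk_sq_less_1])
  then show ?thesis by (simp add: u0_def jsn_def sin_add)
qed

lemma u0_sq_less_1: "(u0 E x)^2 < 1"
proof -
  have "(jsn (x * sqrt ((1 + E) / 2)) (modk E))^2 \<le> 1"
    by (simp add: jsn_def abs_square_le_1)
  then have "(u0 E x)^2 \<le> 1 - E"
    using E by (simp add: u0_def power_mult_distrib mult_left_le)
  with E show ?thesis by linarith
qed

lemma du0_0_sq: "(du0 E 0)^2 = (1 - E) * (1 + E) / 2"
  using E jam_0[OF modk_sq_less_1]
  by (simp add: du0_def jcn_def jdn_def jsn_def power_mult_distrib)

lemma periodic_orbit_u0: "periodic_orbit (u0 E) (du0 E) (2 * T0 E)"
proof
  have "(du0 E 0)^2 = (1 - E^2) / 2"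
    unfolding du0_0_sq by (simp add: algebra_simps power2_eq_square)
  moreover have "0 < E^2" and "E^2 < 1"
    using E by (simp_all add: abs_square_less_1)
  ultimately show "du0 E 0 \<noteq> 0" and "(du0 E 0)^2 < 1/2"
    by auto
  show "0 < 2 * T0 E"
    using E ellK_pos[OF modk_sq_less_1] by (simp add: T0_def)
qed (use u0_deriv du0_deriv u0_odd u0_periodic u0_sq_less_1 in auto)

end

theorem lemma5p1:
  fixes E :: real
  assumes "0 < E" and "E < 1"
  shows "(\<forall>u. bounded (range u) \<and> Lplus_eq E u (\<lambda>_. 0)
            \<longrightarrow> (\<exists>C. \<forall>x. u x = C * deriv (u0 E) x))
         \<and> (\<exists>!U. (\<forall>x. U (- x) = - U x) \<and> (\<forall>x. U (x + 2 * T0 E) = U x)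
                 \<and> Lplus_eq E U (u0 E))"
proof -
  interpret periodic_orbit "u0 E" "du0 E" "2 * T0 E"
    using periodic_orbit_u0[OF assms] .
  have deriv_u0: "deriv (u0 E) = du0 E"
    using u0_deriv[OF assms] by (simp add: DERIV_imp_deriv fun_eq_iff)
  have Lplus_eq_iff: "Lplus_eq E u r \<longleftrightarrow> (\<exists>u'. classical_solution q r u u')"
    if "continuous_on UNIV r" for u r
    unfolding Lplus_eq_def using weak_solution_iff_classical[OF continuous_on_q that]
    by (simp add: q_def)
  show ?thesis
    using bounded_homogeneous_solution periodic_odd_solution_unique
    unfolding deriv_u0 Lplus_eq_iff[OF continuous_on_const] Lplus_eq_iff[OF continuous_on_f]
    by blast
qed

end
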